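(* Let $\phi\in C^3((0,\infty))$, $\eta=\phi'$ and $\hat\eta(r)=\eta(r)+2\eta(2r)$, and suppose there are constants $0<a_0<\tilde r_1<\tilde r_2<2a_0$ and $a_1>a_0$ such that: $\eta'(r)>0$ for $0<r<\tilde r_1$ and $\eta'(r)<0$ for $r>\tilde r_1$; $\eta''(r)<0$ for $0<r<\tilde r_2$ and $\eta''(r)>0$ for $r>\tilde r_2$; $\hat\eta(r)<0$ for $0<r<a_0$ and $\hat\eta(r)>0$ for $r>a_0$; $\hat\eta'(r)>0$ for $0<r<a_1$ and $\hat\eta'(r)<0$ for $r>a_1$. Let $N,K$ be positive integers with $K<N-1$. For $\mathbf r=(r_{-N},\dots,r_N)\in(0,\infty)^{2N+1}$ define $\hat{\mathbf\Psi}^L(\mathbf r)$ by $\hat\psi^L_j(\mathbf r)=\hat\eta(r_j)$, $j=-N,\dots,N$, and $\hat{\mathbf\Psi}^F(\mathbf r)$ by $\hat\psi^F_j(\mathbf r)=\eta(r_j)+2\eta(2r_j)$ for $-N\le j\le -K$ and for $K\le j\le N$, and $\hat\psi^F_j(\mathbf r)=\eta(r_j)+\eta(r_j+r_{j-1})+\eta(r_j+r_{j+1})+[2\eta(2r_K)-\eta(r_K+r_{K-1})-\eta(r_K+r_{K+1})]$ for $-K+1\le j\le K-1$. Fix $\mathbf\Phi\in\mathbb R^{2N+1}$ and set $\mathbf h(\mathbf r,t)=(1-t)[\hat{\mathbf\Psi}^L(\mathbf r)-\mathbf\Phi]+t[\hat{\mathbf\Psi}^F(\mathbf r)-\mathbf\Phi]$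 for $t\in[0,1]$. Let $0<r_L<r_U<a_1$ and $\Omega=(r_L,r_U)^{2N+1}$. Suppose that for every $i=-N,\dots,N$, every $t\in[0,1]$ and every $\mathbf r\in\partial\Omega$: $h_i(\mathbf r,t)>0$ if $r_i=r_U$, and $h_i(\mathbf r,t)<0$ if $r_i=r_L$. If the Jacobian matrix $D\hat{\mathbf\Psi}^F(\mathbf r)$ (with entries $D_j\hat\psi^F_i(\mathbf r)$) is strictly diagonally dominant with positive diagonal, i.e. $D_i\hat\psi^F_i(\mathbf r)>\sum_{j\ne i}|D_j\hat\psi^F_i(\mathbf r)|$ for all $i$, for all $\mathbf r\in\Omega$, then there exists a unique solution $\mathbf r\in\Omega$ of $\hat{\mathbf\Psi}^F(\mathbf r)=\mathbf\Phi$.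
   Context: $\hat{\mathbf\Psi}^L$ and $\hat{\mathbf\Psi}^F$ are the conjugate forces of the local and (symmetrized) force-based quasicontinuum approximations of a one-dimensional atomic chain with nearest and next-nearest neighbour pair interactions given by $\phi$. *)

theory Defs
  imports "HOL-Analysis.Analysis"
begin

definition idx :: "int \<Rightarrow> int set" where
  "idx N = {-N..N}"

definition C3_pos :: "(real \<Rightarrow> real) \<Rightarrow> bool" where
  "C3_pos f \<longleftrightarrow>
     (\<forall>k::nat. k < 3 \<longrightarrow> (\<forall>x>0. ((deriv ^^ k) f) differentiable (at x))) \<and>
     (\<forall>k::nat. k \<le> 3 \<longrightarrow> continuous_on {0<..} ((deriv ^^ k) f))"

definition eta_hat :: "(real \<Rightarrow> real) \<Rightarrow> real \<Rightarrow> real" where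
  "eta_hat \<eta> r = \<eta> r + 2 * \<eta> (2 * r)"

definition PsiL :: "(real \<Rightarrow> real) \<Rightarrow> (int \<Rightarrow> real) \<Rightarrow> int \<Rightarrow> real" where
  "PsiL \<eta> r j = eta_hat \<eta> (r j)"

definition PsiF :: "(real \<Rightarrow> real) \<Rightarrow> int \<Rightarrow> (int \<Rightarrow> real) \<Rightarrow> int \<Rightarrow> real" where
  "PsiF \<eta> K r j =
     (if -K + 1 \<le> j \<and> j \<le> K - 1 then
        \<eta> (r j) + \<eta> (r j + r (j - 1)) + \<eta> (r j + r (j + 1))
        + (2 * \<eta> (2 * r K) - \<eta> (r K + r (K - 1)) - \<eta> (r K + r (K + 1)))
      else \<eta> (r j) + 2 * \<eta> (2 * r j))"

definition hom :: "(real \<Rightarrow> real) \<Rightarrow> int \<Rightarrow> (int \<Rightarrow> real) \<Rightarrow> (int \<Rightarrow> real) \<Rightarrow> real \<Rightarrow> int \<Rightarrow> real" where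
  "hom \<eta> K \<Phi> r t i = (1 - t) * (PsiL \<eta> r i - \<Phi> i) + t * (PsiF \<eta> K r i - \<Phi> i)"

text \<open>Omega = (rL,rU)^{2N+1}, configurations extended by 0 outside the index range.\<close>
definition Omega :: "int \<Rightarrow> real \<Rightarrow> real \<Rightarrow> (int \<Rightarrow> real) set" where
  "Omega N rL rU = {r. (\<forall>j\<in>idx N. rL < r j \<and> r j < rU) \<and> (\<forall>j. j \<notin> idx N \<longrightarrow> r j = 0)}"

definition Omega_bdry :: "int \<Rightarrow> real \<Rightarrow> real \<Rightarrow> (int \<Rightarrow> real) set" where
  "Omega_bdry N rL rU = {r. (\<forall>j\<in>idx N. rL \<le> r j \<and> r j \<le> rU) \<and> (\<forall>j. j \<notin> idx N \<longrightarrow> r j = 0)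
      \<and> (\<exists>j\<in>idx N. r j = rL \<or> r j = rU)}"

definition pD :: "((int \<Rightarrow> real) \<Rightarrow> int \<Rightarrow> real) \<Rightarrow> (int \<Rightarrow> real) \<Rightarrow> int \<Rightarrow> int \<Rightarrow> real" where
  "pD F r i j = deriv (\<lambda>s. F (r(j := s)) i) (r j)"

end

(*
  Write e_i(r) = PsiF_i(r) - Phi_i.  Diagonal dominance of the Jacobian makes e monotone in
  the following sense: if |w_k| is the largest entry of w, then sgn(w_k) times the derivative
  of e_k along w is at least (D_k e_k - sum_{j <> k} |D_j e_k|) |w_k| > 0.  Along the segment
  joining two zeros in Omega this forces e_k to change, so there is at most one zero.
  For existence, minimise max_i |e_i| over the compact closed box.  At a minimiser r0 with a
  nonzero value, the step r0 - u sgn(e(r0)) enters the open box, because the boundary signs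
  make e point outward, and for small u > 0 it strictly decreases every |e_i| attaining the
  maximum, a contradiction.
*)

theory Submission
  imports Defs
begin

section \<open>Diagonally dominant fields on a box\<close>

definition box_on :: "'i set \<Rightarrow> real \<Rightarrow> real \<Rightarrow> ('i \<Rightarrow> real) set" where
  "box_on J a b = {r. (\<forall>j\<in>J. a < r j \<and> r j < b) \<and> (\<forall>j. j \<notin> J \<longrightarrow> r j = 0)}"

definition cbox_on :: "'i set \<Rightarrow> real \<Rightarrow> real \<Rightarrow> ('i \<Rightarrow> real) set" where
  "cbox_on J a b = {r. (\<forall>j\<in>J. a \<le> r j \<and> r j \<le> b) \<and> (\<forall>j. j \<notin> J \<longrightarrow> r j = 0)}"

lemma box_on_subset_cbox_on: "box_on J a b \<subseteq> cbox_on J a b"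
  by (auto simp: box_on_def cbox_on_def less_imp_le)

lemma compact_cbox_on: "compact (cbox_on J a b)"
proof -
  have "cbox_on J a b = PiE UNIV (\<lambda>j. if j \<in> J then {a..b} else {0})"
    by (auto simp: cbox_on_def PiE_UNIV_domain Pi_iff split: if_splits)
  moreover have "compactin (product_topology (\<lambda>_. euclidean) UNIV) \<dots>"
    unfolding compactin_PiE by auto
  ultimately show ?thesis
    by (simp add: euclidean_product_topology)
qed

lemma continuous_on_Max:
  fixes f :: "'i \<Rightarrow> 'a::topological_space \<Rightarrow> real"
  assumes "finite I" "I \<noteq> {}" "\<And>i. i \<in> I \<Longrightarrow> continuous_on S (f i)"
  shows "continuous_on S (\<lambda>x. Max ((\<lambda>i. f i x) ` I))"
  using assms
proof (induction I rule: finite_ne_induct)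
  case (singleton i)
  then show ?case by simp
next
  case (insert i I)
  then have "continuous_on S (\<lambda>x. max (f i x) (Max ((\<lambda>i. f i x) ` I)))"
    by (intro continuous_on_max) auto
  with insert show ?case by simp
qed

lemma diag_dominant_sgn_sum_pos:
  fixes D w :: "'i \<Rightarrow> real"
  assumes "finite J" "i \<in> J" "(\<Sum>j\<in>J-{i}. \<bar>D j\<bar>) < D i"
    and "w i \<noteq> 0" "\<forall>j\<in>J. \<bar>w j\<bar> \<le> \<bar>w i\<bar>"
  shows "0 < sgn (w i) * (\<Sum>j\<in>J. D j * w j)"
proof -
  have off_diag: "- (\<bar>D j\<bar> * \<bar>w i\<bar>) \<le> sgn (w i) * (D j * w j)" if "j \<in> J" for j
  proof -
    have "\<bar>sgn (w i) * (D j * w j)\<bar> \<le> \<bar>D j\<bar> * \<bar>w i\<bar>"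
      using assms(4,5) that by (simp add: abs_mult abs_sgn_eq mult_left_mono)
    then show ?thesis by linarith
  qed
  have "sgn (w i) * (\<Sum>j\<in>J. D j * w j) = D i * \<bar>w i\<bar> + (\<Sum>j\<in>J-{i}. sgn (w i) * (D j * w j))"
    using assms(1,2) by (simp add: sum.remove sum_distrib_left abs_sgn algebra_simps)
  also have "\<dots> \<ge> D i * \<bar>w i\<bar> - (\<Sum>j\<in>J-{i}. \<bar>D j\<bar>) * \<bar>w i\<bar>"
    using sum_mono[of "J-{i}" "\<lambda>j. - (\<bar>D j\<bar> * \<bar>w i\<bar>)"] off_diag
    by (simp add: sum_negf sum_distrib_right)
  moreover have "(\<Sum>j\<in>J-{i}. \<bar>D j\<bar>) * \<bar>w i\<bar> < D i * \<bar>w i\<bar>"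
    using assms(3,4) by simp
  ultimately show ?thesis by linarith
qed

lemma box_on_segment:
  assumes "x \<in> box_on J a b" "y \<in> box_on J a b" "0 \<le> u" "u \<le> 1"
  shows "(\<lambda>j. x j + u * (y j - x j)) \<in> box_on J a b"
proof -
  have "a < (1 - u) * x j + u * y j \<and> (1 - u) * x j + u * y j < b" if "j \<in> J" for j
  proof
    show "(1 - u) * x j + u * y j < b"
      using assms that by (intro convex_bound_lt) (auto simp: box_on_def)
    have "(1 - u) * (- x j) + u * (- y j) < - a"
      using assms that by (intro convex_bound_lt) (auto simp: box_on_def)
    then show "a < (1 - u) * x j + u * y j" by (simp add: algebra_simps)
  qed
  moreover have "x j + u * (y j - x j) = (1 - u) * x j + u * y j" for j
    by (simp add: algebra_simps)
  ultimately show ?thesis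
    using assms(1,2) by (simp add: box_on_def)
qed

locale diag_dominant_field =
  fixes J :: "'i set" and a b :: real
    and e :: "'i \<Rightarrow> ('i \<Rightarrow> real) \<Rightarrow> real" and D :: "('i \<Rightarrow> real) \<Rightarrow> 'i \<Rightarrow> 'i \<Rightarrow> real"
  assumes finite_J: "finite J"
    and line_deriv: "\<And>z w i. z \<in> box_on J a b \<Longrightarrow> i \<in> J \<Longrightarrow>
      ((\<lambda>u. e i (\<lambda>j. z j + u * w j)) has_real_derivative (\<Sum>j\<in>J. D z i j * w j)) (at 0)"
    and diag_dominant: "\<And>z i. z \<in> box_on J a b \<Longrightarrow> i \<in> J \<Longrightarrow>
      (\<Sum>j\<in>J-{i}. \<bar>D z i j\<bar>) < D z i i"
begin

lemma segment_has_deriv: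
  assumes "(\<lambda>j. z j + u * w j) \<in> box_on J a b" "i \<in> J"
  shows "((\<lambda>v. e i (\<lambda>j. z j + v * w j)) has_real_derivative
           (\<Sum>j\<in>J. D (\<lambda>j. z j + u * w j) i j * w j)) (at u)"
proof -
  have "((\<lambda>h. e i (\<lambda>j. (z j + u * w j) + h * w j)) has_real_derivative
          (\<Sum>j\<in>J. D (\<lambda>j. z j + u * w j) i j * w j)) (at 0)"
    by (rule line_deriv[OF assms])
  then show ?thesis
    using DERIV_shift[of "\<lambda>v. e i (\<lambda>j. z j + v * w j)" _ 0 u] by (simp add: algebra_simps)
qed

lemma segment_sgn_increasing:
  assumes "0 < s" "i \<in> J" "w i \<noteq> 0" "\<forall>j\<in>J. \<bar>w j\<bar> \<le> \<bar>w i\<bar>"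
    and seg: "\<And>u. 0 < u \<Longrightarrow> u < s \<Longrightarrow> (\<lambda>j. z j + u * w j) \<in> box_on J a b"
    and cont: "continuous_on {0..s} (\<lambda>u. e i (\<lambda>j. z j + u * w j))"
  shows "sgn (w i) * e i z < sgn (w i) * e i (\<lambda>j. z j + s * w j)"
proof -
  let ?f = "\<lambda>u. sgn (w i) * e i (\<lambda>j. z j + u * w j)"
  have "\<exists>y. DERIV ?f u :> y \<and> 0 < y" if "0 < u" "u < s" for u
  proof -
    let ?z = "\<lambda>j. z j + u * w j"
    have "DERIV ?f u :> sgn (w i) * (\<Sum>j\<in>J. D ?z i j * w j)"
      by (rule DERIV_cmult[OF segment_has_deriv[OF seg[OF that] assms(2)]])
    moreover have "0 < sgn (w i) * (\<Sum>j\<in>J. D ?z i j * w j)"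
      by (rule diag_dominant_sgn_sum_pos[OF finite_J assms(2)
            diag_dominant[OF seg[OF that] assms(2)] assms(3,4)])
    ultimately show ?thesis by blast
  qed
  moreover have "continuous_on {0..s} ?f"
    using cont by (intro continuous_intros)
  ultimately have "?f 0 < ?f s"
    by (rule DERIV_pos_imp_increasing_open[OF assms(1)])
  then show ?thesis by simp
qed

lemma eq_if_values_eq:
  assumes x: "x \<in> box_on J a b" and y: "y \<in> box_on J a b" and eq: "\<forall>i\<in>J. e i x = e i y"
  shows "x = y"
proof (rule ccontr)
  assume "x \<noteq> y"
  define w where "w j = y j - x j" for j
  have "\<exists>j\<in>J. w j \<noteq> 0"
  proof (rule ccontr)
    assume "\<not> (\<exists>j\<in>J. w j \<noteq> 0)"
    then have "x j = y j" for j
      using x y by (cases "j \<in> J") (auto simp: box_on_def w_def)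
    with \<open>x \<noteq> y\<close> show False by auto
  qed
  then have "J \<noteq> {}" by blast
  then have "Max ((\<lambda>j. \<bar>w j\<bar>) ` J) \<in> (\<lambda>j. \<bar>w j\<bar>) ` J"
    using finite_J by (intro Max_in) auto
  then obtain k where k: "k \<in> J" "\<bar>w k\<bar> = Max ((\<lambda>j. \<bar>w j\<bar>) ` J)"
    by auto
  then have k_max: "\<forall>j\<in>J. \<bar>w j\<bar> \<le> \<bar>w k\<bar>"
    using finite_J by auto
  with \<open>\<exists>j\<in>J. w j \<noteq> 0\<close> have "w k \<noteq> 0" by force
  have seg: "(\<lambda>j. x j + u * w j) \<in> box_on J a b" if "0 \<le> u" "u \<le> 1" for u
    using box_on_segment[OF x y that] by (simp add: w_def)
  have "continuous_on {0..1} (\<lambda>u. e k (\<lambda>j. x j + u * w j))"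
  proof (intro continuous_at_imp_continuous_on ballI)
    fix u :: real assume "u \<in> {0..1}"
    with seg show "isCont (\<lambda>u. e k (\<lambda>j. x j + u * w j)) u"
      by (auto intro: DERIV_isCont segment_has_deriv[OF _ k(1)])
  qed
  then have "sgn (w k) * e k x < sgn (w k) * e k (\<lambda>j. x j + 1 * w j)"
    using seg by (intro segment_sgn_increasing[OF zero_less_one k(1) \<open>w k \<noteq> 0\<close> k_max]) auto
  moreover have "(\<lambda>j. x j + 1 * w j) = y" by (simp add: w_def)
  ultimately show False using eq k(1) by simp
qed

definition descent_dir :: "('i \<Rightarrow> real) \<Rightarrow> 'i \<Rightarrow> real" where
  "descent_dir r j = (if j \<in> J then - sgn (e j r) else 0)"

lemma descent_decreases_component:
  assumes "0 < s" "i \<in> J" "e i r0 \<noteq> 0"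
    and seg: "\<And>u. 0 < u \<Longrightarrow> u < s \<Longrightarrow> (\<lambda>j. r0 j + u * descent_dir r0 j) \<in> box_on J a b"
    and cont: "continuous_on {0..s} (\<lambda>u. e i (\<lambda>j. r0 j + u * descent_dir r0 j))"
  shows "sgn (e i r0) * e i (\<lambda>j. r0 j + s * descent_dir r0 j) < \<bar>e i r0\<bar>"
proof -
  have v_i: "descent_dir r0 i = - sgn (e i r0)" "descent_dir r0 i \<noteq> 0"
    "\<forall>j\<in>J. \<bar>descent_dir r0 j\<bar> \<le> \<bar>descent_dir r0 i\<bar>"
    using assms(2,3) by (auto simp: descent_dir_def sgn_if)
  have "sgn (descent_dir r0 i) * e i r0 < sgn (descent_dir r0 i) * e i (\<lambda>j. r0 j + s * descent_dir r0 j)"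
    by (rule segment_sgn_increasing[OF assms(1,2) v_i(2,3) seg cont])
  moreover have "sgn (e i r0) * e i r0 = \<bar>e i r0\<bar>"
    by (simp add: sgn_if)
  ultimately show ?thesis
    using v_i(1) by simp
qed

context
  assumes a_less_b: "a < b"
    and cont: "\<And>i. i \<in> J \<Longrightarrow> continuous_on (cbox_on J a b) (e i)"
    and upper: "\<And>r j. r \<in> cbox_on J a b \<Longrightarrow> j \<in> J \<Longrightarrow> r j = b \<Longrightarrow> 0 < e j r"
    and lower: "\<And>r j. r \<in> cbox_on J a b \<Longrightarrow> j \<in> J \<Longrightarrow> r j = a \<Longrightarrow> e j r < 0"
begin

lemma eventually_descent_in_box:
  assumes r0: "r0 \<in> cbox_on J a b"
  shows "\<forall>\<^sub>F u in at_right 0. (\<lambda>j. r0 j + u * descent_dir r0 j) \<in> box_on J a b"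
proof -
  have "\<forall>\<^sub>F u in at_right 0. a < r0 j + u * descent_dir r0 j \<and> r0 j + u * descent_dir r0 j < b"
    if j: "j \<in> J" for j
  proof -
    have "a \<le> r0 j" "r0 j \<le> b" using r0 j by (auto simp: cbox_on_def)
    then consider "a < r0 j" "r0 j < b" | "r0 j = b" | "r0 j = a" by linarith
    then show ?thesis
    proof cases
      case 1
      have "((\<lambda>u. r0 j + u * descent_dir r0 j) \<longlongrightarrow> r0 j) (at_right 0)"
        by (auto intro!: tendsto_eq_intros)
      with 1 show ?thesis
        by (auto intro: eventually_conj order_tendstoD)
    next
      case 2
      then have "descent_dir r0 j = -1" using upper[OF r0 j] j by (simp add: descent_dir_def)
      with 2 a_less_b show ?thesis
        by (auto simp: eventually_at_right_field intro!: exI[of _ "b - a"])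
    next
      case 3
      then have "descent_dir r0 j = 1" using lower[OF r0 j] j by (simp add: descent_dir_def)
      with 3 a_less_b show ?thesis
        by (auto simp: eventually_at_right_field intro!: exI[of _ "b - a"])
    qed
  qed
  then have "\<forall>\<^sub>F u in at_right 0. \<forall>j\<in>J. a < r0 j + u * descent_dir r0 j \<and> r0 j + u * descent_dir r0 j < b"
    using finite_J by (simp add: eventually_ball_finite)
  then show ?thesis
    by eventually_elim (use r0 in \<open>auto simp: box_on_def cbox_on_def descent_dir_def\<close>)
qed

lemma continuous_on_descent_segment:
  assumes r0: "r0 \<in> cbox_on J a b" and "i \<in> J"
    and box: "\<And>u. 0 < u \<Longrightarrow> u \<le> s \<Longrightarrow> (\<lambda>j. r0 j + u * descent_dir r0 j) \<in> box_on J a b"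
  shows "continuous_on {0..s} (\<lambda>u. e i (\<lambda>j. r0 j + u * descent_dir r0 j))"
proof (rule continuous_on_compose2[OF cont[OF \<open>i \<in> J\<close>]])
  show "continuous_on {0..s} (\<lambda>u j. r0 j + u * descent_dir r0 j)"
    by (intro continuous_intros)
  have "(\<lambda>j. r0 j + u * descent_dir r0 j) \<in> cbox_on J a b" if "0 \<le> u" "u \<le> s" for u
    using box[of u] box_on_subset_cbox_on r0 that by (cases "u = 0") auto
  then show "(\<lambda>u j. r0 j + u * descent_dir r0 j) ` {0..s} \<subseteq> cbox_on J a b"
    by auto
qed

lemma eventually_abs_component_less:
  assumes r0: "r0 \<in> cbox_on J a b" and i: "i \<in> J" and "\<bar>e i r0\<bar> \<le> m" "0 < m" "0 < s"
    and box: "\<And>u. 0 < u \<Longrightarrow> u \<le> s \<Longrightarrow> (\<lambda>j. r0 j + u * descent_dir r0 j) \<in> box_on J a b"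
  shows "\<forall>\<^sub>F u in at_right 0. \<bar>e i (\<lambda>j. r0 j + u * descent_dir r0 j)\<bar> < m"
proof -
  define f where "f = (\<lambda>u. e i (\<lambda>j. r0 j + u * descent_dir r0 j))"
  have cont_f: "continuous_on {0..t} f" if "t \<le> s" for t
    using continuous_on_descent_segment[OF r0 i box] that unfolding f_def by simp
  have lim: "(f \<longlongrightarrow> e i r0) (at_right 0)"
    using continuous_on_Icc_at_rightD[OF continuous_on_descent_segment[OF r0 i box] \<open>0 < s\<close>]
    by (simp add: f_def)
  show ?thesis
  proof (cases "\<bar>e i r0\<bar> < m")
    case True
    then show ?thesis
      using order_tendstoD(2)[OF tendsto_rabs[OF lim]] by (simp add: f_def)
  next
    case False
    with assms(3,4) have "\<bar>e i r0\<bar> = m" "e i r0 \<noteq> 0" by auto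
    have below: "sgn (e i r0) * f u < m" if "0 < u" "u < s" for u
      using descent_decreases_component[OF that(1) i \<open>e i r0 \<noteq> 0\<close>] box that
        cont_f[of u] \<open>\<bar>e i r0\<bar> = m\<close> unfolding f_def by simp
    have "sgn (e i r0) * e i r0 = m"
      using \<open>\<bar>e i r0\<bar> = m\<close> by (auto simp: sgn_if abs_if)
    with tendsto_mult_left[OF lim, of "sgn (e i r0)"]
    have "\<forall>\<^sub>F u in at_right 0. 0 < sgn (e i r0) * f u"
      using \<open>0 < m\<close> by (auto intro: order_tendstoD(1))
    moreover have "\<forall>\<^sub>F u in at_right 0. 0 < u \<and> u < s"
      using \<open>0 < s\<close> unfolding eventually_at_right_field by blast
    ultimately show ?thesis
    proof eventually_elim
      case (elim u)
      with below[of u] \<open>e i r0 \<noteq> 0\<close> show ?case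
        by (cases "0 < e i r0") (auto simp: f_def)
    qed
  qed
qed

lemma smaller_residual_exists:
  assumes r0: "r0 \<in> cbox_on J a b" and "0 < m" and r0_le: "\<forall>i\<in>J. \<bar>e i r0\<bar> \<le> m"
  shows "\<exists>r\<in>box_on J a b. \<forall>i\<in>J. \<bar>e i r\<bar> < m"
proof -
  define p where "p u = (\<lambda>j. r0 j + u * descent_dir r0 j)" for u
  obtain c where "0 < c" and c: "\<And>u. 0 < u \<Longrightarrow> u < c \<Longrightarrow> p u \<in> box_on J a b"
    using eventually_descent_in_box[OF r0] unfolding eventually_at_right_field p_def by blast
  define s where "s = c / 2"
  have "0 < s" and p_box: "\<And>u. 0 < u \<Longrightarrow> u \<le> s \<Longrightarrow> p u \<in> box_on J a b"
    using \<open>0 < c\<close> c by (auto simp: s_def)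
  have "\<forall>\<^sub>F u in at_right 0. \<forall>i\<in>J. \<bar>e i (p u)\<bar> < m"
    using eventually_abs_component_less[OF r0 _ _ \<open>0 < m\<close> \<open>0 < s\<close>] p_box r0_le finite_J
    by (simp add: eventually_ball_finite p_def)
  moreover have "\<forall>\<^sub>F u in at_right 0. 0 < u \<and> u < s"
    using \<open>0 < s\<close> unfolding eventually_at_right_field by blast
  ultimately have "\<forall>\<^sub>F u in at_right 0. (\<forall>i\<in>J. \<bar>e i (p u)\<bar> < m) \<and> 0 < u \<and> u < s"
    by (rule eventually_conj)
  then obtain u where "\<forall>i\<in>J. \<bar>e i (p u)\<bar> < m" "0 < u" "u < s"
    using eventually_happens'[OF trivial_limit_at_right_real] by blast
  with p_box show ?thesis by force
qed

lemma zero_in_box_exists: "\<exists>r\<in>box_on J a b. \<forall>i\<in>J. e i r = 0"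
proof (cases "J = {}")
  case True
  then have "(\<lambda>_. 0) \<in> box_on J a b" by (simp add: box_on_def)
  with True show ?thesis by blast
next
  case False
  define M where "M r = Max ((\<lambda>i. \<bar>e i r\<bar>) ` J)" for r
  have M_ge: "\<bar>e i r\<bar> \<le> M r" if "i \<in> J" for i r
    using finite_J that by (auto simp: M_def)
  have "continuous_on (cbox_on J a b) M"
    unfolding M_def using finite_J False cont by (intro continuous_on_Max continuous_on_rabs) auto
  moreover have "(\<lambda>j. if j \<in> J then a else 0) \<in> cbox_on J a b"
    using a_less_b by (simp add: cbox_on_def)
  ultimately obtain r0 where r0: "r0 \<in> cbox_on J a b"
    and r0_min: "\<And>r. r \<in> cbox_on J a b \<Longrightarrow> M r0 \<le> M r"
    using continuous_attains_inf[OF compact_cbox_on] by blast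
  have zero: "e i r0 = 0" if "i \<in> J" for i
  proof (rule ccontr)
    assume "e i r0 \<noteq> 0"
    with M_ge[OF that, of r0] have "0 < M r0" by linarith
    then obtain r where "r \<in> box_on J a b" "\<forall>i\<in>J. \<bar>e i r\<bar> < M r0"
      using smaller_residual_exists[OF r0] M_ge by blast
    moreover from this have "M r < M r0"
      using finite_J False by (simp add: M_def)
    ultimately show False
      using r0_min box_on_subset_cbox_on by force
  qed
  have "r0 \<in> box_on J a b"
    using r0 zero upper[OF r0] lower[OF r0] by (force simp: box_on_def cbox_on_def)
  with zero show ?thesis by blast
qed

theorem unique_zero_in_box: "\<exists>!r. r \<in> box_on J a b \<and> (\<forall>i\<in>J. e i r = 0)"
  using zero_in_box_exists eq_if_values_eq by (metis (full_types))

end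

end


section \<open>Ridge sums\<close>

definition linform :: "'i set \<Rightarrow> ('i \<Rightarrow> real) \<Rightarrow> ('i \<Rightarrow> real) \<Rightarrow> real" where
  "linform J l r = (\<Sum>j\<in>J. l j * r j)"

definition ridge_sum ::
    "(real \<Rightarrow> real) \<Rightarrow> 'i set \<Rightarrow> (real \<times> ('i \<Rightarrow> real)) list \<Rightarrow> ('i \<Rightarrow> real) \<Rightarrow> real" where
  "ridge_sum \<eta> J ts r = (\<Sum>(c, l)\<leftarrow>ts. c * \<eta> (linform J l r))"

lemma ridge_sum_simps [simp]:
  "ridge_sum \<eta> J [] r = 0"
  "ridge_sum \<eta> J ((c, l) # ts) r = c * \<eta> (linform J l r) + ridge_sum \<eta> J ts r"
  by (simp_all add: ridge_sum_def)

lemma linform_line: "linform J l (\<lambda>j. z j + u * w j) = linform J l z + u * linform J l w"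
  by (simp add: linform_def sum.distrib sum_distrib_left algebra_simps)

lemma linform_indicator:
  assumes "finite J" "S \<subseteq> J"
  shows "linform J (indicator S) r = sum r S"
proof -
  have "{j. j \<in> J \<and> j \<in> S} = S" "J \<inter> S = S"
    using assms(2) by blast+
  with assms(1) show ?thesis
    by (simp add: linform_def)
qed

lemma linform_scale: "linform J (\<lambda>j. c * l j) r = c * linform J l r"
  by (simp add: linform_def sum_distrib_left mult.assoc)

lemma continuous_on_linform: "continuous_on S (linform J l)"
  unfolding linform_def
  by (intro continuous_intros continuous_on_subset[OF continuous_on_product_coordinates]) auto

lemma continuous_on_ridge_sum:
  assumes "continuous_on {0<..} \<eta>"
    and "\<And>r c l. r \<in> S \<Longrightarrow> (c, l) \<in> set ts \<Longrightarrow> 0 < linform J l r"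
  shows "continuous_on S (ridge_sum \<eta> J ts)"
  using assms(2)
proof (induction ts)
  case Nil
  then show ?case by simp
next
  case (Cons t ts)
  obtain c l where t: "t = (c, l)" by fastforce
  have "continuous_on S (\<lambda>r. \<eta> (linform J l r))"
    using Cons.prems t
    by (intro continuous_on_compose2[OF assms(1) continuous_on_linform]) auto
  then have "continuous_on S (\<lambda>r. c * \<eta> (linform J l r) + ridge_sum \<eta> J ts r)"
    using Cons by (intro continuous_intros) auto
  then show ?case by (simp add: t)
qed

lemma ridge_sum_line_deriv:
  assumes "\<And>c l. (c, l) \<in> set ts \<Longrightarrow> \<eta> differentiable (at (linform J l z))"
  shows "((\<lambda>u. ridge_sum \<eta> J ts (\<lambda>j. z j + u * w j)) has_real_derivative
           (\<Sum>j\<in>J. (\<Sum>(c, l)\<leftarrow>ts. c * deriv \<eta> (linform J l z) * l j) * w j)) (at 0)"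
  using assms
proof (induction ts)
  case Nil
  then show ?case by simp
next
  case (Cons t ts)
  obtain c l where t: "t = (c, l)" by fastforce
  have "\<eta> differentiable (at (linform J l z))"
    using Cons.prems t by auto
  then have "(\<eta> has_real_derivative deriv \<eta> (linform J l z)) (at (linform J l z + 0 * linform J l w))"
    by (simp add: DERIV_deriv_iff_real_differentiable)
  then have "((\<lambda>u. c * \<eta> (linform J l z + u * linform J l w)) has_real_derivative
      c * (deriv \<eta> (linform J l z) * linform J l w)) (at 0)"
    by (intro DERIV_cmult DERIV_chain2[where f = \<eta>]) (auto intro!: derivative_eq_intros)
  moreover have "((\<lambda>u. ridge_sum \<eta> J ts (\<lambda>j. z j + u * w j)) has_real_derivative
      (\<Sum>j\<in>J. (\<Sum>(c, l)\<leftarrow>ts. c * deriv \<eta> (linform J l z) * l j) * w j)) (at 0)"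
    using Cons by (intro Cons.IH) auto
  moreover have "c * (deriv \<eta> (linform J l z) * linform J l w)
      = (\<Sum>j\<in>J. c * deriv \<eta> (linform J l z) * l j * w j)"
    by (simp add: linform_def sum_distrib_left mult.assoc)
  ultimately show ?case
    by (simp add: t linform_line distrib_right sum.distrib DERIV_add)
qed

lemma deriv_coordinate_eq_if_line_deriv:
  assumes "finite J" "j \<in> J"
    and "\<And>w. ((\<lambda>u. f (\<lambda>i. z i + u * w i)) has_real_derivative (\<Sum>i\<in>J. d i * w i)) (at 0)"
  shows "deriv (\<lambda>s. f (z(j := s))) (z j) = d j"
proof -
  have "((\<lambda>u. f (\<lambda>i. z i + u * indicator {j} i)) has_real_derivative d j) (at (z j - z j))"
  proof -
    have "(\<Sum>i\<in>J. d i * indicator {j} i) = d j"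
      using linform_indicator[OF assms(1), of "{j}" d] assms(2) by (simp add: linform_def mult.commute)
    with assms(3)[of "indicator {j}"] show ?thesis by simp
  qed
  then have "((\<lambda>s. f (\<lambda>i. z i + (s - z j) * indicator {j} i)) has_real_derivative d j) (at (z j))"
    using DERIV_shift[of _ _ "z j" "- z j"] by simp
  moreover have "(\<lambda>i. z i + (s - z j) * indicator {j} i) = z(j := s)" for s
    by (auto simp: indicator_def)
  ultimately show ?thesis
    by (simp add: DERIV_imp_deriv)
qed

section \<open>The force-based quasicontinuum operator\<close>

definition psiF_terms :: "int \<Rightarrow> int \<Rightarrow> (real \<times> (int \<Rightarrow> real)) list" where
  "psiF_terms K i =
     (if -K + 1 \<le> i \<and> i \<le> K - 1 then
        [(1, indicator {i}), (1, indicator {i, i - 1}), (1, indicator {i, i + 1}),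
         (2, \<lambda>j. 2 * indicator {K} j), (-1, indicator {K, K - 1}), (-1, indicator {K, K + 1})]
      else [(1, indicator {i}), (2, \<lambda>j. 2 * indicator {i} j)])"

lemma finite_idx: "finite (idx N)"
  by (simp add: idx_def)

lemma linform_psiF_terms_pos:
  assumes "0 < K" "K < N - 1" "i \<in> idx N" "(c, l) \<in> set (psiF_terms K i)"
    and pos: "\<forall>j\<in>idx N. 0 < r j"
  shows "0 < linform (idx N) l r"
proof -
  have "K \<in> idx N" "K - 1 \<in> idx N" "K + 1 \<in> idx N"
    using assms(1,2) by (auto simp: idx_def)
  moreover have "i - 1 \<in> idx N \<and> i + 1 \<in> idx N" if "-K + 1 \<le> i \<and> i \<le> K - 1"
    using that assms(1,2) by (auto simp: idx_def)
  ultimately show ?thesis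
    using assms(3,4) pos finite_idx
    by (auto simp: psiF_terms_def linform_indicator linform_scale add_pos_pos split: if_splits)
qed

lemma PsiF_eq_ridge_sum:
  assumes "0 < K" "K < N - 1" "i \<in> idx N"
  shows "PsiF \<eta> K r i = ridge_sum \<eta> (idx N) (psiF_terms K i) r"
proof -
  have "K \<in> idx N" "K - 1 \<in> idx N" "K + 1 \<in> idx N"
    using assms(1,2) by (auto simp: idx_def)
  moreover have "i - 1 \<in> idx N \<and> i + 1 \<in> idx N" if "-K + 1 \<le> i \<and> i \<le> K - 1"
    using that assms(1,2) by (auto simp: idx_def)
  ultimately show ?thesis
    using assms(3) finite_idx
    by (simp add: PsiF_def psiF_terms_def linform_indicator linform_scale)
qed

lemma PsiF_line_deriv:
  assumes "0 < K" "K < N - 1" "i \<in> idx N" "\<forall>j\<in>idx N. 0 < z j"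
    and \<eta>_diff: "\<And>x. 0 < x \<Longrightarrow> \<eta> differentiable (at x)"
  shows "((\<lambda>u. PsiF \<eta> K (\<lambda>j. z j + u * w j) i) has_real_derivative
           (\<Sum>j\<in>idx N. pD (PsiF \<eta> K) z i j * w j)) (at 0)"
proof -
  define d where "d j = (\<Sum>(c, l)\<leftarrow>psiF_terms K i. c * deriv \<eta> (linform (idx N) l z) * l j)" for j
  have line: "((\<lambda>u. PsiF \<eta> K (\<lambda>j. z j + u * w j) i) has_real_derivative (\<Sum>j\<in>idx N. d j * w j)) (at 0)"
    for w
    unfolding PsiF_eq_ridge_sum[OF assms(1-3)] d_def
    by (rule ridge_sum_line_deriv) (use \<eta>_diff linform_psiF_terms_pos[OF assms(1-3) _ assms(4)] in auto)
  have "pD (PsiF \<eta> K) z i j = d j" if "j \<in> idx N" for j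
    unfolding pD_def by (rule deriv_coordinate_eq_if_line_deriv[OF finite_idx that line])
  with line[of w] show ?thesis by simp
qed

lemma continuous_on_PsiF:
  assumes "0 < K" "K < N - 1" "i \<in> idx N" "0 < a" "continuous_on {0<..} \<eta>"
  shows "continuous_on (cbox_on (idx N) a b) (\<lambda>r. PsiF \<eta> K r i)"
proof -
  have "continuous_on (cbox_on (idx N) a b) (ridge_sum \<eta> (idx N) (psiF_terms K i))"
  proof (rule continuous_on_ridge_sum[OF assms(5)])
    fix r c l assume "r \<in> cbox_on (idx N) a b" "(c, l) \<in> set (psiF_terms K i)"
    with assms(4) show "0 < linform (idx N) l r"
      by (intro linform_psiF_terms_pos[OF assms(1-3)]) (auto simp: cbox_on_def)
  qed
  then show ?thesis
    by (simp add: PsiF_eq_ridge_sum[OF assms(1-3)])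
qed

lemma C3_pos_deriv_differentiable:
  assumes "C3_pos \<phi>" "0 < x"
  shows "deriv \<phi> differentiable (at x)"
proof -
  have "(1::nat) < 3" by simp
  with assms have "(deriv ^^ 1) \<phi> differentiable (at x)"
    unfolding C3_pos_def by blast
  then show ?thesis by simp
qed

lemma C3_pos_continuous_on_deriv:
  assumes "C3_pos \<phi>"
  shows "continuous_on {0<..} (deriv \<phi>)"
proof -
  have "(1::nat) \<le> 3" by simp
  with assms have "continuous_on {0<..} ((deriv ^^ 1) \<phi>)"
    unfolding C3_pos_def by blast
  then show ?thesis by simp
qed

lemma diag_dominant_field_PsiF:
  assumes "0 < K" "K < N - 1" "0 < a"
    and \<eta>_diff: "\<And>x. 0 < x \<Longrightarrow> \<eta> differentiable (at x)"
    and dd: "\<And>z i. z \<in> box_on (idx N) a b \<Longrightarrow> i \<in> idx N \<Longrightarrow>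
      (\<Sum>j\<in>idx N - {i}. \<bar>pD (PsiF \<eta> K) z i j\<bar>) < pD (PsiF \<eta> K) z i i"
  shows "diag_dominant_field (idx N) a b (\<lambda>i r. PsiF \<eta> K r i - \<Phi> i) (pD (PsiF \<eta> K))"
proof
  fix z w i assume z: "z \<in> box_on (idx N) a b" and i: "i \<in> idx N"
  have "\<forall>j\<in>idx N. 0 < z j"
    using z \<open>0 < a\<close> by (force simp: box_on_def)
  from DERIV_diff[OF PsiF_line_deriv[OF assms(1,2) i this \<eta>_diff] DERIV_const]
  show "((\<lambda>u. PsiF \<eta> K (\<lambda>j. z j + u * w j) i - \<Phi> i) has_real_derivative
          (\<Sum>j\<in>idx N. pD (PsiF \<eta> K) z i j * w j)) (at 0)"
    by simp
qed (use dd finite_idx in auto)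

theorem lemma4p3:
  fixes \<phi> :: "real \<Rightarrow> real" and a0 a1 r1 r2 rL rU :: real and N K :: int
    and \<Phi> :: "int \<Rightarrow> real"
  assumes phi_C3: "C3_pos \<phi>"
    and cst: "0 < a0" "a0 < r1" "r1 < r2" "r2 < 2 * a0" "a1 > a0"
    and eta1: "\<forall>r. 0 < r \<and> r < r1 \<longrightarrow> deriv (deriv \<phi>) r > 0" "\<forall>r. r > r1 \<longrightarrow> deriv (deriv \<phi>) r < 0"
    and eta2: "\<forall>r. 0 < r \<and> r < r2 \<longrightarrow> deriv (deriv (deriv \<phi>)) r < 0"
              "\<forall>r. r > r2 \<longrightarrow> deriv (deriv (deriv \<phi>)) r > 0"
    and etah: "\<forall>r. 0 < r \<and> r < a0 \<longrightarrow> eta_hat (deriv \<phi>) r < 0" "\<forall>r. r > a0 \<longrightarrow> eta_hat (deriv \<phi>) r > 0"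
    and etah1: "\<forall>r. 0 < r \<and> r < a1 \<longrightarrow> deriv (eta_hat (deriv \<phi>)) r > 0"
               "\<forall>r. r > a1 \<longrightarrow> deriv (eta_hat (deriv \<phi>)) r < 0"
    and NK: "0 < K" "K < N - 1"
    and rLU: "0 < rL" "rL < rU" "rU < a1"
    and bdry: "\<forall>i\<in>idx N. \<forall>t\<in>{0..1}. \<forall>r\<in>Omega_bdry N rL rU.
                 (r i = rU \<longrightarrow> hom (deriv \<phi>) K \<Phi> r t i > 0) \<and> (r i = rL \<longrightarrow> hom (deriv \<phi>) K \<Phi> r t i < 0)"
    and dd: "\<forall>r\<in>Omega N rL rU. \<forall>i\<in>idx N.
               pD (PsiF (deriv \<phi>) K) r i i > (\<Sum>j\<in>idx N - {i}. \<bar>pD (PsiF (deriv \<phi>) K) r i j\<bar>)"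
  shows "\<exists>!r. r \<in> Omega N rL rU \<and> (\<forall>j\<in>idx N. PsiF (deriv \<phi>) K r j = \<Phi> j)"
proof -
  have Omega: "Omega N rL rU = box_on (idx N) rL rU"
    by (simp add: Omega_def box_on_def)
  interpret diag_dominant_field "idx N" rL rU "\<lambda>i r. PsiF (deriv \<phi>) K r i - \<Phi> i"
    "pD (PsiF (deriv \<phi>) K)"
    by (rule diag_dominant_field_PsiF[OF NK rLU(1) C3_pos_deriv_differentiable[OF phi_C3]]) (use dd in \<open>auto simp: Omega\<close>)
  have "\<exists>!r. r \<in> box_on (idx N) rL rU \<and> (\<forall>i\<in>idx N. PsiF (deriv \<phi>) K r i - \<Phi> i = 0)"
  proof (rule unique_zero_in_box)
    fix i assume i: "i \<in> idx N"
    show "continuous_on (cbox_on (idx N) rL rU) (\<lambda>r. PsiF (deriv \<phi>) K r i - \<Phi> i)"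
      by (intro continuous_on_diff continuous_on_const continuous_on_PsiF[OF NK i rLU(1) C3_pos_continuous_on_deriv[OF phi_C3]])
  next
    fix r j assume r: "r \<in> cbox_on (idx N) rL rU" and j: "j \<in> idx N"
    have "r \<in> Omega_bdry N rL rU" if "r j = rL \<or> r j = rU"
      using r j that by (auto simp: Omega_bdry_def cbox_on_def)
    moreover have "(r j = rU \<longrightarrow> 0 < hom (deriv \<phi>) K \<Phi> r 1 j) \<and> (r j = rL \<longrightarrow> hom (deriv \<phi>) K \<Phi> r 1 j < 0)"
      if "r \<in> Omega_bdry N rL rU"
      by (rule bdry[rule_format, OF j _ that]) simp
    ultimately show "r j = rU \<Longrightarrow> 0 < PsiF (deriv \<phi>) K r j - \<Phi> j"
      and "r j = rL \<Longrightarrow> PsiF (deriv \<phi>) K r j - \<Phi> j < 0"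
      by (auto simp: hom_def)
  qed (rule rLU(2))
  then show ?thesis
    by (simp add: Omega)
qed

end
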